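(* Assume the no-anticipation, common-support and transition-independence conditions stated in the context. Then for every $t=T_0+1,\dots,T$, \[ \boldsymbol\mu^{\mathrm{ATT}}_t=\mathbb{E}\Big[\mathbf X_t-\mathbb{E}\big[\mathbf X_t\mid \mathbf X_1^{T_0},D=0\big]\;\Big|\;D=1\Big]. \]
   Context: Fix integers $T_0\ge1$, $T_1\ge1$, $T=T_0+T_1$, $K\ge2$, and a set of $K$ outcome categories $\mathcal Y=\{\bar y^{(1)},\dots,\bar y^{(K)}\}$. On a probability space, a unit has a binary treatment indicator $D\in\{0,1\}$ (treated units, $D=1$, are untreated in periods $1,\dots,T_0$ and treated in all periods $T_0+1,\dots,T$; control units are never treated) and potential outcomes $Y_t(0),Y_t(1)\in\mathcal Y$, $t=1,\dots,T$. For $d\in\{0,1\}$ let $\mathbf X_t(d)=(\mathbf 1(Y_t(d)=\bar y^{(1)}),\dots,\mathbf 1(Y_t(d)=\bar y^{(K)}))^\top\in\mathcal X:=\{x\in\{0,1\}^K:\sum_{k=1}^K x^{(k)}=1\}$. The observed outcome vectors are $\mathbf X_t=\mathbf X_t(0)$ for $1\le t\le T_0$ and $\mathbf X_t=D\mathbf X_t(1)+(1-D)\mathbf X_t(0)$ for $t\ge T_0+1$. Write $\mathbf X_1^{T_0}=(\mathbf X_1,\dots,\mathbf X_{T_0})$ and $\mathbf X_1^{T_0}(0)=(\mathbf X_1(0),\dots,\mathbf X_{T_0}(0))$. The average treatment effect on the treated is $\boldsymbol\mu^{\mathrm{ATT}}_t=\mathbb{E}[\mathbf X_t(1)-\mathbf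 X_t(0)\mid D=1]$ for $t\ge T_0+1$. Conditional probabilities/expectations are taken only given events of positive probability. No anticipation: $\mathbf X_t(1)=\mathbf X_t(0)$ for all $t\in\{1,\dots,T_0\}$. Common support: there is $\epsilon>0$ such that for every $\mathbf x_1^{T_0}\in\mathcal X^{T_0}$ with $\Pr(\mathbf X_1^{T_0}=\mathbf x_1^{T_0})>0$, $\epsilon\le\Pr(D=1\mid\mathbf X_1^{T_0}=\mathbf x_1^{T_0})<1-\epsilon$. Transition independence: for every $t=T_0+1,\dots,T$, all $\mathbf x_t\in\mathcal X$ and all $\mathbf x_1^{T_0}\in\mathcal X^{T_0}$, $\Pr(\mathbf X_t(0)=\mathbf x_t\mid \mathbf X_1^{T_0}(0)=\mathbf x_1^{T_0},D=1)=\Pr(\mathbf X_t(0)=\mathbf x_t\mid \mathbf X_1^{T_0}(0)=\mathbf x_1^{T_0},D=0)$. *)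

theory Defs
  imports "HOL-Probability.Probability"
begin

text \<open>Outcome vectors: the one-hot encoding in {0,1}^K, represented as a function
  nat \<Rightarrow> real with support in {1..K}; category k is ybar k.\<close>
definition onehot :: "nat \<Rightarrow> (nat \<Rightarrow> 'y) \<Rightarrow> 'y \<Rightarrow> nat \<Rightarrow> real" where
  "onehot K ybar y = (\<lambda>k. if 1 \<le> k \<and> k \<le> K \<and> y = ybar k then 1 else 0)"

definition Xset :: "nat \<Rightarrow> (nat \<Rightarrow> real) set" where
  "Xset K = {x. (\<forall>k. x k \<in> {0, 1}) \<and> (\<forall>k. k \<notin> {1..K} \<longrightarrow> x k = 0)
              \<and> (\<Sum>k=1..K. x k) = 1}"

definition Yobs :: "nat \<Rightarrow> ('a \<Rightarrow> bool) \<Rightarrow> (nat \<Rightarrow> 'a \<Rightarrow> 'y) \<Rightarrow> (nat \<Rightarrow> 'a \<Rightarrow> 'y)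
    \<Rightarrow> nat \<Rightarrow> 'a \<Rightarrow> 'y" where
  "Yobs T0 D Y0 Y1 t \<omega> = (if t \<le> T0 then Y0 t \<omega> else if D \<omega> then Y1 t \<omega> else Y0 t \<omega>)"

definition hist_event :: "'a measure \<Rightarrow> nat \<Rightarrow> (nat \<Rightarrow> 'y) \<Rightarrow> nat \<Rightarrow> (nat \<Rightarrow> 'a \<Rightarrow> 'y)
    \<Rightarrow> (nat \<Rightarrow> nat \<Rightarrow> real) \<Rightarrow> 'a set" where
  "hist_event M K ybar T0 Y xs =
     {\<omega> \<in> space M. \<forall>t\<in>{1..T0}. onehot K ybar (Y t \<omega>) = xs t}"

definition cprob :: "'a measure \<Rightarrow> 'a set \<Rightarrow> 'a set \<Rightarrow> real" where
  "cprob M A B = measure M (A \<inter> B) / measure M B"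

definition cexp :: "'a measure \<Rightarrow> ('a \<Rightarrow> real) \<Rightarrow> 'a set \<Rightarrow> real" where
  "cexp M f B = (\<integral>\<omega>. f \<omega> * indicator B \<omega> \<partial>M) / measure M B"

end

theory Submission
  imports Defs
begin

text \<open>
  Fix a post-treatment period t and a category k, and let A be the treated event and F the event
  that Y_t(0) is the k-th category. On A the observed outcome is Y_t(1), so both sides contain
  E[X_t(1)_k; A] and the claim reduces to E[P(F | history, D = 0); A] = P(F \<inter> A).
  The pre-treatment history takes finitely many values, so its level sets form a finite partition
  into cells. In a cell that meets A with positive probability, common support makes the controls
  of that cell non-negligible as well, and transition independence gives
  P(F | cell, D = 0) = P(F | cell, D = 1). Summing P(F | cell \<inter> A) P(cell \<inter> A) over the cells
  yields P(F \<inter> A).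
\<close>

lemma cexp_cong: "(\<And>\<omega>. \<omega> \<in> B \<Longrightarrow> f \<omega> = g \<omega>) \<Longrightarrow> cexp M f B = cexp M g B"
  unfolding cexp_def by (auto simp: indicator_def intro!: Bochner_Integration.integral_cong)

lemma (in finite_measure) cexp_indicator:
  assumes "F \<in> sets M" "B \<in> sets M"
  shows "cexp M (indicator F) B = cprob M F B"
  using assms by (simp add: cexp_def cprob_def indicator_inter_arith[symmetric])

lemma (in finite_measure) cexp_diff_eq_of_has_bochner_integral:
  assumes "integrable M (\<lambda>\<omega>. f \<omega> * indicator B \<omega>)"
    and "has_bochner_integral M (\<lambda>\<omega>. g \<omega> * indicator B \<omega>) I"
    and "has_bochner_integral M (\<lambda>\<omega>. h \<omega> * indicator B \<omega>) I"
  shows "cexp M (\<lambda>\<omega>. f \<omega> - g \<omega>) B = cexp M (\<lambda>\<omega>. f \<omega> - h \<omega>) B"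
proof -
  have "(\<integral>\<omega>. (f \<omega> - g \<omega>) * indicator B \<omega> \<partial>M) = (\<integral>\<omega>. f \<omega> * indicator B \<omega> \<partial>M) - I"
    using assms(1,2) by (simp add: left_diff_distrib has_bochner_integral_iff)
  moreover have "(\<integral>\<omega>. (f \<omega> - h \<omega>) * indicator B \<omega> \<partial>M) = (\<integral>\<omega>. f \<omega> * indicator B \<omega> \<partial>M) - I"
    using assms(1,3) by (simp add: left_diff_distrib has_bochner_integral_iff)
  ultimately show ?thesis by (simp add: cexp_def)
qed

lemma (in finite_measure) measure_Diff_pos_of_cprob_less_1:
  assumes "A \<in> sets M" "E \<in> sets M" "measure M (E \<inter> A) > 0" "cprob M A E < 1"
  shows "measure M (E - A) > 0"
proof -
  have "measure M (E \<inter> A) \<le> measure M E"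
    using assms(1,2) by (intro finite_measure_mono) auto
  then have "measure M (A \<inter> E) < measure M E"
    using assms(3,4) by (simp add: cprob_def Int_commute divide_less_eq)
  then show ?thesis
    using finite_measure_Diff'[OF assms(2,1)] by (simp add: Int_commute)
qed

lemma (in finite_measure) has_bochner_integral_label_indicator:
  assumes fin: "finite (\<rho> ` space M)"
    and cells: "\<And>h. h \<in> \<rho> ` space M \<Longrightarrow> \<rho> -` {h} \<inter> space M \<in> sets M"
    and B: "B \<in> sets M"
  shows "has_bochner_integral M (\<lambda>\<omega>. c (\<rho> \<omega>) * indicator B \<omega>)
           (\<Sum>h\<in>\<rho> ` space M. c h * measure M (\<rho> -` {h} \<inter> space M \<inter> B))"
proof -
  have "has_bochner_integral M (\<lambda>\<omega>. \<Sum>h\<in>\<rho> ` space M. c h * indicator (\<rho> -` {h} \<inter> space M \<inter> B) \<omega>)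
          (\<Sum>h\<in>\<rho> ` space M. c h * measure M (\<rho> -` {h} \<inter> space M \<inter> B))"
    using cells B by (intro has_bochner_integral_sum has_bochner_integral_mult_right
        has_bochner_integral_real_indicator) (auto simp: less_top[symmetric])
  moreover have "c (\<rho> \<omega>) * indicator B \<omega>
      = (\<Sum>h\<in>\<rho> ` space M. c h * indicator (\<rho> -` {h} \<inter> space M \<inter> B) \<omega>)" if "\<omega> \<in> space M" for \<omega>
  proof -
    have "(\<Sum>h\<in>\<rho> ` space M. c h * indicator (\<rho> -` {h} \<inter> space M \<inter> B) \<omega>)
        = (\<Sum>h\<in>\<rho> ` space M. if h = \<rho> \<omega> then c (\<rho> \<omega>) * indicator B \<omega> else 0)"
      using that by (intro sum.cong) (auto simp: indicator_def)
    then show ?thesis using fin that by simp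
  qed
  ultimately show ?thesis by (simp cong: has_bochner_integral_cong)
qed

lemma (in finite_measure) has_bochner_integral_label_cprob:
  assumes fin: "finite (\<rho> ` space M)"
    and cells: "\<And>h. h \<in> \<rho> ` space M \<Longrightarrow> \<rho> -` {h} \<inter> space M \<in> sets M"
    and A: "A \<in> sets M" and F: "F \<in> sets M"
    and agree: "\<And>h. h \<in> \<rho> ` space M \<Longrightarrow> measure M (\<rho> -` {h} \<inter> space M \<inter> A) > 0 \<Longrightarrow>
                  c h = cprob M F (\<rho> -` {h} \<inter> space M \<inter> A)"
  shows "has_bochner_integral M (\<lambda>\<omega>. c (\<rho> \<omega>) * indicator A \<omega>) (measure M (F \<inter> A))"
proof -
  let ?E = "\<lambda>h. \<rho> -` {h} \<inter> space M"
  have cell_term: "c h * measure M (?E h \<inter> A) = 1 * measure M (?E h \<inter> (F \<inter> A))"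
    if h: "h \<in> \<rho> ` space M" for h
  proof (cases "measure M (?E h \<inter> A) > 0")
    case True
    then show ?thesis using agree[OF h] by (simp add: cprob_def Int_ac)
  next
    case False
    then have "measure M (?E h \<inter> A) = 0" by (simp add: not_less measure_le_0_iff)
    moreover have "measure M (?E h \<inter> (F \<inter> A)) \<le> measure M (?E h \<inter> A)"
      using cells[OF h] A by (intro finite_measure_mono) auto
    ultimately show ?thesis by (simp add: measure_le_0_iff)
  qed
  have "has_bochner_integral M (\<lambda>\<omega>. 1 * indicator (F \<inter> A) \<omega>) (measure M (F \<inter> A))"
    using A F by (simp add: has_bochner_integral_real_indicator less_top[symmetric])
  then have "measure M (F \<inter> A) = (\<Sum>h\<in>\<rho> ` space M. 1 * measure M (?E h \<inter> (F \<inter> A)))"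
    using has_bochner_integral_label_indicator[OF fin cells, of "F \<inter> A" "\<lambda>_. 1"] A F
    by (auto intro: has_bochner_integral_eq)
  also have "\<dots> = (\<Sum>h\<in>\<rho> ` space M. c h * measure M (?E h \<inter> A))"
    using cell_term by simp
  finally show ?thesis
    using has_bochner_integral_label_indicator[OF fin cells A, of c] by simp
qed

lemma (in finite_measure) has_bochner_integral_cprob_complement:
  assumes fin: "finite (\<rho> ` space M)"
    and cells: "\<And>h. h \<in> \<rho> ` space M \<Longrightarrow> \<rho> -` {h} \<inter> space M \<in> sets M"
    and A: "A \<in> sets M" and F: "F \<in> sets M"
    and overlap: "\<And>h. h \<in> \<rho> ` space M \<Longrightarrow> measure M (\<rho> -` {h} \<inter> space M \<inter> A) > 0 \<Longrightarrow>
                    cprob M A (\<rho> -` {h} \<inter> space M) < 1"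
    and transition: "\<And>h. h \<in> \<rho> ` space M \<Longrightarrow> measure M (\<rho> -` {h} \<inter> space M \<inter> A) > 0 \<Longrightarrow>
                    measure M (\<rho> -` {h} \<inter> space M - A) > 0 \<Longrightarrow>
                    cprob M F (\<rho> -` {h} \<inter> space M \<inter> A) = cprob M F (\<rho> -` {h} \<inter> space M - A)"
  shows "has_bochner_integral M (\<lambda>\<omega>. cprob M F (\<rho> -` {\<rho> \<omega>} \<inter> space M - A) * indicator A \<omega>)
           (measure M (F \<inter> A))"
proof (rule has_bochner_integral_label_cprob[OF fin cells A F])
  fix h assume h: "h \<in> \<rho> ` space M" and pos: "measure M (\<rho> -` {h} \<inter> space M \<inter> A) > 0"
  have "measure M (\<rho> -` {h} \<inter> space M - A) > 0"
    using measure_Diff_pos_of_cprob_less_1[OF A cells[OF h] pos overlap[OF h pos]] .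
  then show "cprob M F (\<rho> -` {h} \<inter> space M - A) = cprob M F (\<rho> -` {h} \<inter> space M \<inter> A)"
    using transition[OF h pos] by simp
qed

lemma onehot_out_of_range: "k \<notin> {1..K} \<Longrightarrow> onehot K ybar y k = 0"
  by (auto simp: onehot_def)

lemma onehot_eq_onehot_iff:
  assumes "k \<in> {1..K}"
  shows "onehot K ybar y = onehot K ybar (ybar k) \<longleftrightarrow> y = ybar k"
proof
  assume "onehot K ybar y = onehot K ybar (ybar k)"
  then have "onehot K ybar y k = onehot K ybar (ybar k) k" by simp
  then show "y = ybar k" using assms by (simp add: onehot_def split: if_splits)
qed simp

lemma onehot_in_Xset:
  assumes "inj_on ybar {1..K}" and "y \<in> ybar ` {1..K}"
  shows "onehot K ybar y \<in> Xset K"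
proof -
  obtain j where j: "j \<in> {1..K}" "y = ybar j" using assms(2) by blast
  have "(\<Sum>i=1..K. onehot K ybar y i) = (\<Sum>i\<in>{1..K}. if i = j then 1 else 0)"
    using assms(1) j by (intro sum.cong) (auto simp: onehot_def dest: inj_onD)
  also have "\<dots> = 1" using j(1) by simp
  finally show ?thesis by (auto simp: Xset_def onehot_def)
qed

lemma (in finite_measure) has_bochner_integral_onehot:
  assumes "Y \<in> M \<rightarrow>\<^sub>M count_space UNIV" and "k \<in> {1..K}" and "A \<in> sets M"
  shows "has_bochner_integral M (\<lambda>\<omega>. onehot K ybar (Y \<omega>) k * indicator A \<omega>)
           (measure M ({\<omega> \<in> space M. Y \<omega> = ybar k} \<inter> A))"
proof -
  let ?F = "{\<omega> \<in> space M. Y \<omega> = ybar k}"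
  have "?F \<in> sets M" using assms(1) by measurable
  then have "has_bochner_integral M (indicator (?F \<inter> A)) (measure M (?F \<inter> A))"
    using assms(3) by (intro has_bochner_integral_real_indicator) (auto simp: less_top[symmetric])
  moreover have "onehot K ybar (Y \<omega>) k * indicator A \<omega> = indicator (?F \<inter> A) \<omega>" if "\<omega> \<in> space M" for \<omega>
    using that assms(2) by (auto simp: onehot_def indicator_def)
  ultimately show ?thesis by (simp cong: has_bochner_integral_cong)
qed

text \<open>Restricting to {1..T0} makes two histories equal exactly when they agree on the
  pre-treatment periods, so the level sets of this label are the events \<^const>\<open>hist_event\<close>.\<close>
definition pre_history :: "nat \<Rightarrow> (nat \<Rightarrow> 'y) \<Rightarrow> nat \<Rightarrow> (nat \<Rightarrow> 'a \<Rightarrow> 'y) \<Rightarrow> 'a \<Rightarrow> nat \<Rightarrow> nat \<Rightarrow> real" where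
  "pre_history K ybar T0 Y \<omega> = restrict (\<lambda>s. onehot K ybar (Y s \<omega>)) {1..T0}"

lemma hist_event_eq_pre_history:
  "hist_event M K ybar T0 Y xs = pre_history K ybar T0 Y -` {restrict xs {1..T0}} \<inter> space M"
proof -
  have "(\<forall>s\<in>{1..T0}. f s = xs s) \<longleftrightarrow> restrict f {1..T0} = restrict xs {1..T0}" for f :: "nat \<Rightarrow> nat \<Rightarrow> real"
    by (metis restrict_apply' restrict_ext)
  then show ?thesis by (auto simp: hist_event_def pre_history_def)
qed

lemma hist_event_own_history:
  "hist_event M K ybar T0 Y (\<lambda>s. onehot K ybar (Y s \<omega>))
     = pre_history K ybar T0 Y -` {pre_history K ybar T0 Y \<omega>} \<inter> space M"
  by (simp add: hist_event_eq_pre_history pre_history_def)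

lemma hist_event_Yobs: "hist_event M K ybar T0 (Yobs T0 D Y0 Y1) = hist_event M K ybar T0 Y0"
  by (auto simp: hist_event_def Yobs_def fun_eq_iff)

lemma hist_event_Yobs_own_history:
  "hist_event M K ybar T0 (Yobs T0 D Y0 Y1) (\<lambda>s. onehot K ybar (Yobs T0 D Y0 Y1 s \<omega>))
     = hist_event M K ybar T0 Y0 (\<lambda>s. onehot K ybar (Y0 s \<omega>))"
  by (auto simp: hist_event_def Yobs_def)

lemma hist_event_sets:
  assumes "\<And>s. s \<in> {1..T0} \<Longrightarrow> Y s \<in> M \<rightarrow>\<^sub>M count_space UNIV"
  shows "hist_event M K ybar T0 Y xs \<in> sets M"
proof -
  have "{\<omega> \<in> space M. onehot K ybar (Y s \<omega>) = xs s} \<in> sets M" if "s \<in> {1..T0}" for s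
    using assms[OF that] by measurable
  then show ?thesis
    unfolding hist_event_def by (intro sets.sets_Collect_finite_All) auto
qed

lemma finite_pre_history_image:
  assumes "\<And>s \<omega>. s \<in> {1..T0} \<Longrightarrow> \<omega> \<in> space M \<Longrightarrow> Y s \<omega> \<in> ybar ` {1..K}"
  shows "finite (pre_history K ybar T0 Y ` space M)"
proof (rule finite_subset)
  show "pre_history K ybar T0 Y ` space M \<subseteq> PiE {1..T0} (\<lambda>_. onehot K ybar ` ybar ` {1..K})"
    using assms by (auto simp: pre_history_def)
qed (intro finite_PiE; simp)

lemma (in finite_measure) cexp_observed_control:
  assumes t: "T0 < t" and k: "k \<in> {1..K}"
    and A: "{\<omega> \<in> space M. D \<omega>} \<in> sets M" and F: "{\<omega> \<in> space M. Y0 t \<omega> = ybar k} \<in> sets M"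
    and H: "hist_event M K ybar T0 Y0 (\<lambda>s. onehot K ybar (Y0 s \<omega>)) \<in> sets M"
  shows "cexp M (\<lambda>\<omega>'. onehot K ybar (Yobs T0 D Y0 Y1 t \<omega>') k)
           (hist_event M K ybar T0 (Yobs T0 D Y0 Y1) (\<lambda>s. onehot K ybar (Yobs T0 D Y0 Y1 s \<omega>))
            \<inter> {\<omega>' \<in> space M. \<not> D \<omega>'})
       = cprob M {\<omega>' \<in> space M. Y0 t \<omega>' = ybar k}
           (hist_event M K ybar T0 Y0 (\<lambda>s. onehot K ybar (Y0 s \<omega>)) - {\<omega>' \<in> space M. D \<omega>'})"
    (is "cexp M ?f (?H' \<inter> _) = cprob M ?F (?H - ?A)")
proof -
  have "?H' \<inter> {\<omega>' \<in> space M. \<not> D \<omega>'} = ?H - ?A"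
    unfolding hist_event_Yobs_own_history by (auto simp: hist_event_def)
  moreover have "cexp M ?f (?H - ?A) = cexp M (indicator ?F) (?H - ?A)"
    using t k by (intro cexp_cong) (auto simp: Yobs_def onehot_def hist_event_def)
  ultimately show ?thesis
    using A F H by (simp add: cexp_indicator sets.Diff)
qed

lemma (in prob_space) has_bochner_integral_control_term:
  assumes Y0_meas: "\<And>s. s \<in> {1..T0} \<Longrightarrow> Y0 s \<in> M \<rightarrow>\<^sub>M count_space UNIV"
    and Y0_range: "\<And>s \<omega>. s \<in> {1..T0} \<Longrightarrow> \<omega> \<in> space M \<Longrightarrow> Y0 s \<omega> \<in> ybar ` {1..K}"
    and ybar_inj: "inj_on ybar {1..K}"
    and D_meas: "D \<in> M \<rightarrow>\<^sub>M count_space UNIV" and Yt_meas: "Y0 t \<in> M \<rightarrow>\<^sub>M count_space UNIV"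
    and k: "k \<in> {1..K}"
    and common_support: "\<exists>\<epsilon>>0. \<forall>xs. (\<forall>t\<in>{1..T0}. xs t \<in> Xset K) \<longrightarrow>
           measure M (hist_event M K ybar T0 (Yobs T0 D Y0 Y1) xs) > 0 \<longrightarrow>
           \<epsilon> \<le> cprob M {\<omega> \<in> space M. D \<omega>} (hist_event M K ybar T0 (Yobs T0 D Y0 Y1) xs)
           \<and> cprob M {\<omega> \<in> space M. D \<omega>} (hist_event M K ybar T0 (Yobs T0 D Y0 Y1) xs) < 1 - \<epsilon>"
    and transition_independence: "\<And>x xs. x \<in> Xset K \<Longrightarrow> (\<forall>s\<in>{1..T0}. xs s \<in> Xset K) \<Longrightarrow>
           measure M (hist_event M K ybar T0 Y0 xs \<inter> {\<omega> \<in> space M. D \<omega>}) > 0 \<Longrightarrow>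
           measure M (hist_event M K ybar T0 Y0 xs \<inter> {\<omega> \<in> space M. \<not> D \<omega>}) > 0 \<Longrightarrow>
           cprob M {\<omega> \<in> space M. onehot K ybar (Y0 t \<omega>) = x}
                 (hist_event M K ybar T0 Y0 xs \<inter> {\<omega> \<in> space M. D \<omega>})
         = cprob M {\<omega> \<in> space M. onehot K ybar (Y0 t \<omega>) = x}
                 (hist_event M K ybar T0 Y0 xs \<inter> {\<omega> \<in> space M. \<not> D \<omega>})"
  shows "has_bochner_integral M
           (\<lambda>\<omega>. cprob M {\<omega>' \<in> space M. Y0 t \<omega>' = ybar k}
                  (hist_event M K ybar T0 Y0 (\<lambda>s. onehot K ybar (Y0 s \<omega>)) - {\<omega>' \<in> space M. D \<omega>'})
                * indicator {\<omega> \<in> space M. D \<omega>} \<omega>)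
           (measure M ({\<omega> \<in> space M. Y0 t \<omega> = ybar k} \<inter> {\<omega> \<in> space M. D \<omega>}))"
proof -
  let ?h = "pre_history K ybar T0 Y0"
  let ?A = "{\<omega> \<in> space M. D \<omega>}"
  let ?F = "{\<omega> \<in> space M. Y0 t \<omega> = ybar k}"
  have A: "?A \<in> sets M" using D_meas by measurable
  have F: "?F \<in> sets M" using Yt_meas by measurable
  have cell_eq: "?h -` {h} \<inter> space M = hist_event M K ybar T0 Y0 h" if "h \<in> ?h ` space M" for h
    using that by (auto simp: hist_event_eq_pre_history pre_history_def)
  have cell_sets: "?h -` {h} \<inter> space M \<in> sets M" if "h \<in> ?h ` space M" for h
    unfolding cell_eq[OF that] by (rule hist_event_sets[OF Y0_meas])
  have cell_Xset: "\<forall>s\<in>{1..T0}. h s \<in> Xset K" if "h \<in> ?h ` space M" for h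
    using that Y0_range by (auto simp: pre_history_def intro!: onehot_in_Xset[OF ybar_inj])
  have "has_bochner_integral M (\<lambda>\<omega>. cprob M ?F (?h -` {?h \<omega>} \<inter> space M - ?A) * indicator ?A \<omega>)
      (measure M (?F \<inter> ?A))"
  proof (rule has_bochner_integral_cprob_complement[OF _ cell_sets A F])
    show "finite (?h ` space M)" using Y0_range by (rule finite_pre_history_image)
  next
    fix h assume h: "h \<in> ?h ` space M" and pos: "measure M (?h -` {h} \<inter> space M \<inter> ?A) > 0"
    obtain \<epsilon> where \<epsilon>: "\<epsilon> > 0" "\<And>xs. \<forall>s\<in>{1..T0}. xs s \<in> Xset K \<Longrightarrow>
        measure M (hist_event M K ybar T0 Y0 xs) > 0 \<Longrightarrow> cprob M ?A (hist_event M K ybar T0 Y0 xs) < 1 - \<epsilon>"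
      using common_support by (auto simp: hist_event_Yobs)
    have "measure M (?h -` {h} \<inter> space M \<inter> ?A) \<le> measure M (?h -` {h} \<inter> space M)"
      using cell_sets[OF h] by (intro finite_measure_mono) auto
    then show "cprob M ?A (?h -` {h} \<inter> space M) < 1"
      using \<epsilon>(1) \<epsilon>(2)[OF cell_Xset[OF h]] pos by (simp add: cell_eq[OF h])
    have N_eq: "hist_event M K ybar T0 Y0 h - ?A = hist_event M K ybar T0 Y0 h \<inter> {\<omega> \<in> space M. \<not> D \<omega>}"
      by (auto simp: hist_event_def)
    have F_eq: "{\<omega> \<in> space M. onehot K ybar (Y0 t \<omega>) = onehot K ybar (ybar k)} = ?F"
      using k by (simp add: onehot_eq_onehot_iff)
    assume "measure M (?h -` {h} \<inter> space M - ?A) > 0"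
    then show "cprob M ?F (?h -` {h} \<inter> space M \<inter> ?A) = cprob M ?F (?h -` {h} \<inter> space M - ?A)"
      using transition_independence[OF onehot_in_Xset[OF ybar_inj, of "ybar k"] cell_Xset[OF h]] pos k
      unfolding N_eq F_eq cell_eq[OF h] by simp
  qed
  then show ?thesis by (simp add: hist_event_own_history)
qed

theorem proposition1:
  fixes M :: "'a measure" and D :: "'a \<Rightarrow> bool"
    and Y0 Y1 :: "nat \<Rightarrow> 'a \<Rightarrow> 'y" and ybar :: "nat \<Rightarrow> 'y"
    and T0 T1 T K :: nat
  assumes prob: "prob_space M"
    and T0: "T0 \<ge> 1" and T1: "T1 \<ge> 1" and TT: "T = T0 + T1" and K: "K \<ge> 2"
    and ybar_inj: "inj_on ybar {1..K}"
    and D_meas: "D \<in> M \<rightarrow>\<^sub>M count_space UNIV"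
    and Y0_meas: "\<And>t. t \<in> {1..T} \<Longrightarrow> Y0 t \<in> M \<rightarrow>\<^sub>M count_space UNIV"
    and Y1_meas: "\<And>t. t \<in> {1..T} \<Longrightarrow> Y1 t \<in> M \<rightarrow>\<^sub>M count_space UNIV"
    and Y0_range: "\<And>t \<omega>. t \<in> {1..T} \<Longrightarrow> \<omega> \<in> space M \<Longrightarrow> Y0 t \<omega> \<in> ybar ` {1..K}"
    and Y1_range: "\<And>t \<omega>. t \<in> {1..T} \<Longrightarrow> \<omega> \<in> space M \<Longrightarrow> Y1 t \<omega> \<in> ybar ` {1..K}"
    and no_anticipation: "\<And>t \<omega>. t \<in> {1..T0} \<Longrightarrow> \<omega> \<in> space M \<Longrightarrow>
           onehot K ybar (Y1 t \<omega>) = onehot K ybar (Y0 t \<omega>)"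
    and common_support: "\<exists>\<epsilon>>0. \<forall>xs. (\<forall>t\<in>{1..T0}. xs t \<in> Xset K) \<longrightarrow>
           measure M (hist_event M K ybar T0 (Yobs T0 D Y0 Y1) xs) > 0 \<longrightarrow>
           \<epsilon> \<le> cprob M {\<omega> \<in> space M. D \<omega>} (hist_event M K ybar T0 (Yobs T0 D Y0 Y1) xs)
           \<and> cprob M {\<omega> \<in> space M. D \<omega>} (hist_event M K ybar T0 (Yobs T0 D Y0 Y1) xs) < 1 - \<epsilon>"
    and transition_independence: "\<And>t x xs. t \<in> {T0+1..T} \<Longrightarrow> x \<in> Xset K \<Longrightarrow>
           (\<forall>s\<in>{1..T0}. xs s \<in> Xset K) \<Longrightarrow>
           measure M (hist_event M K ybar T0 Y0 xs \<inter> {\<omega> \<in> space M. D \<omega>}) > 0 \<Longrightarrow>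
           measure M (hist_event M K ybar T0 Y0 xs \<inter> {\<omega> \<in> space M. \<not> D \<omega>}) > 0 \<Longrightarrow>
           cprob M {\<omega> \<in> space M. onehot K ybar (Y0 t \<omega>) = x}
                 (hist_event M K ybar T0 Y0 xs \<inter> {\<omega> \<in> space M. D \<omega>})
         = cprob M {\<omega> \<in> space M. onehot K ybar (Y0 t \<omega>) = x}
                 (hist_event M K ybar T0 Y0 xs \<inter> {\<omega> \<in> space M. \<not> D \<omega>})"
  shows "\<forall>t\<in>{T0+1..T}.
     (\<lambda>k. cexp M (\<lambda>\<omega>. onehot K ybar (Y1 t \<omega>) k - onehot K ybar (Y0 t \<omega>) k)
                 {\<omega> \<in> space M. D \<omega>})
   = (\<lambda>k. cexp M (\<lambda>\<omega>. onehot K ybar (Yobs T0 D Y0 Y1 t \<omega>) k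
              - cexp M (\<lambda>\<omega>'. onehot K ybar (Yobs T0 D Y0 Y1 t \<omega>') k)
                  (hist_event M K ybar T0 (Yobs T0 D Y0 Y1)
                      (\<lambda>s. onehot K ybar (Yobs T0 D Y0 Y1 s \<omega>))
                   \<inter> {\<omega>' \<in> space M. \<not> D \<omega>'}))
                 {\<omega> \<in> space M. D \<omega>})"
proof (intro ballI ext)
  \<comment> \<open>Observed pre-treatment outcomes are Y0 by definition of Yobs.\<close>
  interpret prob_space M by (rule prob)
  fix t k assume t: "t \<in> {T0+1..T}"
  let ?A = "{\<omega> \<in> space M. D \<omega>}"
  let ?F0 = "{\<omega> \<in> space M. Y0 t \<omega> = ybar k}"
  let ?H = "\<lambda>\<omega>. hist_event M K ybar T0 Y0 (\<lambda>s. onehot K ybar (Y0 s \<omega>))"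
  have t_post: "t \<in> {1..T}" "T0 < t" using t T0 by auto
  have Y0_pre_meas: "\<And>s. s \<in> {1..T0} \<Longrightarrow> Y0 s \<in> M \<rightarrow>\<^sub>M count_space UNIV"
    and Y0_pre_range: "\<And>s \<omega>. s \<in> {1..T0} \<Longrightarrow> \<omega> \<in> space M \<Longrightarrow> Y0 s \<omega> \<in> ybar ` {1..K}"
    using Y0_meas Y0_range TT by auto
  have A_sets: "?A \<in> sets M" using D_meas by measurable
  have F0_sets: "?F0 \<in> sets M" using Y0_meas[OF t_post(1)] by measurable
  have H_sets: "?H \<omega> \<in> sets M" for \<omega> using Y0_pre_meas by (rule hist_event_sets)
  show "cexp M (\<lambda>\<omega>. onehot K ybar (Y1 t \<omega>) k - onehot K ybar (Y0 t \<omega>) k) ?A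
      = cexp M (\<lambda>\<omega>. onehot K ybar (Yobs T0 D Y0 Y1 t \<omega>) k
              - cexp M (\<lambda>\<omega>'. onehot K ybar (Yobs T0 D Y0 Y1 t \<omega>') k)
                  (hist_event M K ybar T0 (Yobs T0 D Y0 Y1)
                      (\<lambda>s. onehot K ybar (Yobs T0 D Y0 Y1 s \<omega>))
                   \<inter> {\<omega>' \<in> space M. \<not> D \<omega>'})) ?A"
    (is "cexp M ?lhs _ = cexp M ?rhs _")
  proof (cases "k \<in> {1..K}")
    case False
    then show ?thesis by (simp add: onehot_out_of_range cexp_def)
  next
    case k: True
    have control: "has_bochner_integral M (\<lambda>\<omega>. cprob M ?F0 (?H \<omega> - ?A) * indicator ?A \<omega>)
        (measure M (?F0 \<inter> ?A))"
      using Y0_pre_meas Y0_pre_range ybar_inj D_meas Y0_meas[OF t_post(1)] k common_support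
        transition_independence[OF t] by (rule has_bochner_integral_control_term)
    have "cexp M ?rhs ?A = cexp M (\<lambda>\<omega>. onehot K ybar (Y1 t \<omega>) k - cprob M ?F0 (?H \<omega> - ?A)) ?A"
    proof (rule cexp_cong)
      fix \<omega> assume "\<omega> \<in> ?A"
      then show "?rhs \<omega> = onehot K ybar (Y1 t \<omega>) k - cprob M ?F0 (?H \<omega> - ?A)"
        unfolding cexp_observed_control[OF t_post(2) k A_sets F0_sets H_sets]
        using t_post by (simp add: Yobs_def)
    qed
    also have "\<dots> = cexp M ?lhs ?A"
    proof (rule cexp_diff_eq_of_has_bochner_integral)
      show "integrable M (\<lambda>\<omega>. onehot K ybar (Y1 t \<omega>) k * indicator ?A \<omega>)"
        using has_bochner_integral_onehot[OF Y1_meas[OF t_post(1)] k A_sets]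
        by (simp add: has_bochner_integral_iff)
      show "has_bochner_integral M (\<lambda>\<omega>. onehot K ybar (Y0 t \<omega>) k * indicator ?A \<omega>)
          (measure M (?F0 \<inter> ?A))"
        using Y0_meas[OF t_post(1)] k A_sets by (rule has_bochner_integral_onehot)
    qed (fact control)
    finally show ?thesis ..
  qed
qed

end
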